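(* Let $\mathbf K$ be a commutative field and $p\in\mathbb N$. For $A\in\mathbf K^{\mathcal M_p}$ let $L_A\in\mathbf K^{\mathcal M_{p\times p}}$ be the lower triangular element of Toeplitz type defined, for $l\in\mathbb N$ and $0\le u,w<p^l$ (identified with words of length $l$), by $L_A[u,w]=A[u-w]$ if $u\ge w$ and $L_A[u,w]=0$ if $u<w$, where $u-w$ is read as a word of length $l$. Then $$\dim\big(\overline{A}^{rec}\big)\le\dim\big(\overline{L_A}^{rec}\big)\le 2\dim\big(\overline{A}^{rec}\big),$$ and $A\mapsto L_A$ induces an isomorphism of vector spaces between $\mathrm{Rec}_p(\mathbf K)$ and $\mathcal T_{p-rec}(\mathbf K)$, the space of lower triangular elements of Toeplitz type in $\mathrm{Rec}_{p\times p}(\mathbf K)$.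
   Context: For $p,q,l\in\mathbb N$, $\mathcal M_{p\times q}^l$ is the set of pairs $(U,W)$ of words of common length $l$ with $U\in\{0,\dots,p-1\}^l$, $W\in\{0,\dots,q-1\}^l$, $\mathcal M_{p\times q}=\bigcup_l\mathcal M_{p\times q}^l$, and $\mathcal M_p=\mathcal M_{p\times1}$ is identified with the free monoid of words over $\{0,\dots,p-1\}$. Words of length $l$ over $\{0,\dots,p-1\}$ are identified with $\{0,\dots,p^l-1\}$ via $u_1\dots u_l\mapsto\sum_{j=1}^lu_jp^{j-1}$, so that for $A\in\mathbf K^{\mathcal M_{p\times p}}$ the restriction $A[\mathcal M_{p\times p}^l]$ is a $p^l\times p^l$ matrix. $A$ is of Toeplitz type if every $A[\mathcal M_{p\times p}^l]$ is a Toeplitz matrix (entries depend only on $u-w$), and lower triangular if $A[u,w]=0$ whenever $u<w$. Shift maps: $(\rho(S,T)A)[U,W]=A[US,WT]$; the recursive closure $\overline{A}^{rec}$ is the span of all $\rho(S,T)A$; $\mathrm{Rec}_{p\times q}(\mathbf K)$ is the set of $A$ with $\dim\overline{A}^{rec}<\infty$, and $\mathrm{Rec}_p(\mathbf K)=\mathrm{Rec}_{p\times1}(\mathbf K)$. *)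

theory Defs
  imports Main "HOL-Library.Function_Algebras" "HOL-Library.Extended_Nat"
begin

definition fscale :: "'k::field \<Rightarrow> ('a \<Rightarrow> 'k) \<Rightarrow> ('a \<Rightarrow> 'k)" where
  "fscale c f = (\<lambda>x. c * f x)"

lemma vector_space_fscale: "vector_space (fscale :: 'k::field \<Rightarrow> ('a \<Rightarrow> 'k) \<Rightarrow> _)"
  by unfold_locales (auto simp: fscale_def fun_eq_iff algebra_simps)

abbreviation fspan :: "('a \<Rightarrow> 'k::field) set \<Rightarrow> ('a \<Rightarrow> 'k) set" where
  "fspan \<equiv> module.span fscale"

abbreviation fdim :: "('a \<Rightarrow> 'k::field) set \<Rightarrow> nat" where
  "fdim \<equiv> vector_space.dim fscale"

definition fin_dim :: "('a \<Rightarrow> 'k::field) set \<Rightarrow> bool" where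
  "fin_dim V \<longleftrightarrow> (\<exists>B. finite B \<and> V \<subseteq> fspan B)"

definition edim :: "('a \<Rightarrow> 'k::field) set \<Rightarrow> enat" where
  "edim V = (if fin_dim V then enat (fdim V) else \<infinity>)"

definition words :: "nat \<Rightarrow> nat list set" where
  "words p = {w. set w \<subseteq> {..<p}}"

definition words_len :: "nat \<Rightarrow> nat \<Rightarrow> nat list set" where
  "words_len p l = {w. length w = l \<and> set w \<subseteq> {..<p}}"

definition num :: "nat \<Rightarrow> nat list \<Rightarrow> nat" where
  "num p w = (\<Sum>j<length w. w ! j * p ^ j)"

definition word_of :: "nat \<Rightarrow> nat \<Rightarrow> nat \<Rightarrow> nat list" where
  "word_of p l n = map (\<lambda>j. (n div p ^ j) mod p) [0..<l]"

definition Mpq :: "nat \<Rightarrow> nat \<Rightarrow> (nat list \<times> nat list) set" where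
  "Mpq p q = {(U, W). length U = length W \<and> set U \<subseteq> {..<p} \<and> set W \<subseteq> {..<q}}"

text \<open>Elements of K^{M_p} are represented as functions on nat lists vanishing off the words.\<close>
definition Fun1 :: "nat \<Rightarrow> (nat list \<Rightarrow> 'k::zero) set" where
  "Fun1 p = {A. \<forall>w. w \<notin> words p \<longrightarrow> A w = 0}"

definition Fun2 :: "nat \<Rightarrow> nat \<Rightarrow> (nat list \<times> nat list \<Rightarrow> 'k::zero) set" where
  "Fun2 p q = {A. \<forall>x. x \<notin> Mpq p q \<longrightarrow> A x = 0}"

definition rho1 :: "nat \<Rightarrow> nat list \<Rightarrow> (nat list \<Rightarrow> 'k::zero) \<Rightarrow> (nat list \<Rightarrow> 'k)" where
  "rho1 p S A = (\<lambda>U. if U \<in> words p then A (U @ S) else 0)"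

definition rho2 :: "nat \<Rightarrow> nat \<Rightarrow> nat list \<times> nat list \<Rightarrow> (nat list \<times> nat list \<Rightarrow> 'k::zero)
    \<Rightarrow> (nat list \<times> nat list \<Rightarrow> 'k)" where
  "rho2 p q ST A = (\<lambda>(U, W). if (U, W) \<in> Mpq p q then A (U @ fst ST, W @ snd ST) else 0)"

definition rec_closure1 :: "nat \<Rightarrow> (nat list \<Rightarrow> 'k::field) \<Rightarrow> (nat list \<Rightarrow> 'k) set" where
  "rec_closure1 p A = fspan {rho1 p S A | S. S \<in> words p}"

definition rec_closure2 :: "nat \<Rightarrow> nat \<Rightarrow> (nat list \<times> nat list \<Rightarrow> 'k::field)
    \<Rightarrow> (nat list \<times> nat list \<Rightarrow> 'k) set" where
  "rec_closure2 p q A = fspan {rho2 p q ST A | ST. ST \<in> Mpq p q}"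

definition Rec1 :: "nat \<Rightarrow> (nat list \<Rightarrow> 'k::field) set" where
  "Rec1 p = {A \<in> Fun1 p. fin_dim (rec_closure1 p A)}"

definition Rec2 :: "nat \<Rightarrow> nat \<Rightarrow> (nat list \<times> nat list \<Rightarrow> 'k::field) set" where
  "Rec2 p q = {A \<in> Fun2 p q. fin_dim (rec_closure2 p q A)}"

definition toeplitz_type :: "nat \<Rightarrow> (nat list \<times> nat list \<Rightarrow> 'k) \<Rightarrow> bool" where
  "toeplitz_type p B \<longleftrightarrow> (\<forall>l U W U' W'. U \<in> words_len p l \<and> W \<in> words_len p l \<and>
      U' \<in> words_len p l \<and> W' \<in> words_len p l \<and>
      int (num p U) - int (num p W) = int (num p U') - int (num p W') \<longrightarrow>
      B (U, W) = B (U', W'))"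

definition lower_triangular :: "nat \<Rightarrow> (nat list \<times> nat list \<Rightarrow> 'k::zero) \<Rightarrow> bool" where
  "lower_triangular p B \<longleftrightarrow> (\<forall>l U W. U \<in> words_len p l \<and> W \<in> words_len p l \<and>
      num p U < num p W \<longrightarrow> B (U, W) = 0)"

definition LA :: "nat \<Rightarrow> (nat list \<Rightarrow> 'k::zero) \<Rightarrow> (nat list \<times> nat list \<Rightarrow> 'k)" where
  "LA p A = (\<lambda>(U, W). if (U, W) \<in> Mpq p p \<and> num p W \<le> num p U
      then A (word_of p (length U) (num p U - num p W)) else 0)"

definition Trec :: "nat \<Rightarrow> (nat list \<times> nat list \<Rightarrow> 'k::field) set" where
  "Trec p = {B \<in> Rec2 p p. toeplitz_type p B \<and> lower_triangular p B}"

end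

theory Submission
  imports Defs
begin

text \<open>
  Column 0 of \<open>L_A\<close> is \<open>A\<close>, and taking column 0 is a linear map sending
  \<open>\<rho>(S,T) L_A\<close> to \<open>\<rho>(S') A\<close> (or to 0), where \<open>S'\<close> is the word of \<open>S - T\<close>;
  hence it maps the recursive closure of \<open>L_A\<close> onto that of \<open>A\<close>, which gives the
  lower bound. Conversely, subtracting \<open>WT\<close> from \<open>US\<close> block by block,
  \<open>\<rho>(S,T) L_A = L_{A'} + U_{A''}\<close>, where \<open>U\<close> is the strictly upper triangular
  Toeplitz analogue of \<open>L\<close> and \<open>A' = \<rho>(S - T) A\<close>, \<open>A'' = \<rho>(S - T - 1) A\<close> account for
  the absence or presence of a borrow from the low block. So the recursive closure of
  \<open>L_A\<close> lies in \<open>L(V) + U(V)\<close> for \<open>V\<close> the recursive closure of \<open>A\<close>, which gives the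
  factor 2. Finally a lower triangular Toeplitz element is determined by its column 0,
  so \<open>L\<close> is a bijection onto them, and it preserves finite dimensionality of the
  recursive closure by the two bounds.
\<close>

section \<open>Dimension of linear images\<close>

interpretation fun_space: vector_space "fscale :: 'k::field \<Rightarrow> ('a \<Rightarrow> 'k) \<Rightarrow> ('a \<Rightarrow> 'k)"
  by (rule vector_space_fscale)

lemma fin_dim_obtain_basis:
  fixes V :: "('a \<Rightarrow> 'k::field) set"
  assumes "fin_dim V"
  obtains B where "finite B" "V \<subseteq> fspan B" "card B = fdim V"
proof -
  obtain C where "finite C" "V \<subseteq> fspan C" using assms fin_dim_def by blast
  obtain B where B: "B \<subseteq> V" "fun_space.independent B" "V \<subseteq> fspan B" "card B = fdim V"
    by (rule fun_space.basis_exists)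
  have "finite B"
    using fun_space.independent_span_bound[OF \<open>finite C\<close> B(2)] B(1) \<open>V \<subseteq> fspan C\<close> by blast
  from this B(3,4) show thesis by (rule that)
qed

lemma fin_dim_iff_edim_less_infinity: "fin_dim V \<longleftrightarrow> edim V < \<infinity>"
  by (simp add: edim_def)

lemma span_linear_image:
  fixes f :: "('a \<Rightarrow> 'k::field) \<Rightarrow> ('b \<Rightarrow> 'k)"
  assumes "Vector_Spaces.linear fscale fscale f"
  shows "fspan (f ` B) = f ` fspan B"
  by (rule module_hom.span_image[OF module_hom_linearI[OF assms]])

lemma edim_linear_image_le:
  fixes f :: "('a \<Rightarrow> 'k::field) \<Rightarrow> ('b \<Rightarrow> 'k)"
  assumes "Vector_Spaces.linear fscale fscale f"
  shows "edim (f ` V) \<le> edim V"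
proof (cases "fin_dim V")
  case True
  then obtain B where B: "finite B" "V \<subseteq> fspan B" "card B = fdim V"
    by (rule fin_dim_obtain_basis)
  then have span: "f ` V \<subseteq> fspan (f ` B)"
    using span_linear_image[OF assms] by auto
  then have "fdim (f ` V) \<le> card (f ` B)"
    using B(1) by (simp add: fun_space.dim_le_card)
  also have "\<dots> \<le> fdim V"
    using B(1,3) card_image_le by metis
  finally show ?thesis
    using span B(1) True by (auto simp: edim_def fin_dim_def)
qed (simp add: edim_def)

lemma edim_span_sum_linear_images_le:
  fixes f g :: "('a \<Rightarrow> 'k::field) \<Rightarrow> ('b \<Rightarrow> 'k)"
  assumes "Vector_Spaces.linear fscale fscale f" "Vector_Spaces.linear fscale fscale g"
    and G: "G \<subseteq> {f x + g y | x y. x \<in> V \<and> y \<in> V}"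
  shows "edim (fspan G) \<le> 2 * edim V"
proof (cases "fin_dim V")
  case True
  then obtain B where B: "finite B" "V \<subseteq> fspan B" "card B = fdim V"
    by (rule fin_dim_obtain_basis)
  have "G \<subseteq> fspan (f ` B \<union> g ` B)"
    using G B(2) by (force simp: fun_space.span_Un span_linear_image[OF assms(1)]
        span_linear_image[OF assms(2)])
  then have span: "fspan G \<subseteq> fspan (f ` B \<union> g ` B)"
    by (simp add: fun_space.span_minimal)
  then have "fdim (fspan G) \<le> card (f ` B \<union> g ` B)"
    by (rule fun_space.dim_le_card) (use B(1) in simp)
  also have "\<dots> \<le> 2 * card B"
    using B(1) card_Un_le[of "f ` B" "g ` B"] card_image_le[of B f] card_image_le[of B g]
    by linarith
  finally have "fdim (fspan G) \<le> 2 * fdim V"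
    using B(3) by simp
  moreover have "fin_dim (fspan G)"
    unfolding fin_dim_def using span B(1) by (intro exI[of _ "f ` B \<union> g ` B"]) auto
  ultimately show ?thesis
    using True by (simp add: edim_def numeral_eq_enat)
qed (simp add: edim_def imult_infinity_right)

section \<open>Words as base-\<open>p\<close> numerals\<close>

lemma num_Nil [simp]: "num p [] = 0"
  by (simp add: num_def)

lemma num_Cons [simp]: "num p (x # w) = x + p * num p w"
  by (simp add: num_def sum.lessThan_Suc_shift sum_distrib_left algebra_simps
      del: sum.lessThan_Suc)

lemma num_append: "num p (U @ S) = num p U + p ^ length U * num p S"
  by (induction U) (auto simp: algebra_simps)

lemma num_replicate_0 [simp]: "num p (replicate n 0) = 0"
  by (induction n) auto

lemma num_less: "set w \<subseteq> {..<p} \<Longrightarrow> num p w < p ^ length w"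
proof (induction w)
  case (Cons x w)
  then have "x < p" "num p w + 1 \<le> p ^ length w" by auto
  then have "x + p * num p w < p * (num p w + 1)" by simp
  also have "\<dots> \<le> p * p ^ length w" using \<open>num p w + 1 \<le> p ^ length w\<close> by (rule mult_le_mono2)
  finally show ?case by simp
qed simp

lemma word_of_0 [simp]: "word_of p 0 n = []"
  by (simp add: word_of_def)

lemma length_word_of [simp]: "length (word_of p l n) = l"
  by (simp add: word_of_def)

lemma word_of_Suc: "word_of p (Suc l) n = n mod p # word_of p l (n div p)"
  unfolding word_of_def by (simp add: map_upt_Suc div_mult2_eq del: upt_Suc)

lemma word_of_num: "set w \<subseteq> {..<p} \<Longrightarrow> word_of p (length w) (num p w) = w"
  by (induction w) (auto simp: word_of_Suc)

lemma set_word_of: "n < p ^ l \<Longrightarrow> set (word_of p l n) \<subseteq> {..<p}"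
  by (cases "p = 0") (auto simp: word_of_def power_0_left split: if_splits)

lemma num_word_of: "n < p ^ l \<Longrightarrow> num p (word_of p l n) = n"
proof (induction l arbitrary: n)
  case (Suc l)
  then have "p > 0" by (cases "p = 0") auto
  with Suc.prems have "n div p < p ^ l"
    by (simp add: div_less_iff_less_mult mult.commute)
  with Suc.IH show ?case
    by (simp add: word_of_Suc)
qed simp

lemma word_of_in_words: "n < p ^ l \<Longrightarrow> word_of p l n \<in> words p"
  using set_word_of by (simp add: words_def)

lemma word_of_add_mult:
  assumes "a < p ^ l" "b < p ^ k"
  shows "word_of p (l + k) (a + p ^ l * b) = word_of p l a @ word_of p k b"
proof -
  let ?w = "word_of p l a @ word_of p k b"
  have "set ?w \<subseteq> {..<p}" using set_word_of assms by auto
  moreover have "num p ?w = a + p ^ l * b" using assms by (simp add: num_append num_word_of)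
  ultimately show ?thesis using word_of_num[of ?w p] by simp
qed

lemma mult_add_le_mult_if_less:
  fixes s t P :: nat
  shows "t < s \<Longrightarrow> P * t + P \<le> P * s"
  using mult_le_mono2[of "Suc t" s P] by simp

lemma add_mult_le_add_mult_iff:
  fixes u w s t P :: nat
  assumes "u < P" "w < P"
  shows "w + P * t \<le> u + P * s \<longleftrightarrow> (if w \<le> u then t \<le> s else t < s)"
proof (cases t s rule: linorder_cases)
  case less
  then have "P * t + P \<le> P * s"
    by (rule mult_add_le_mult_if_less)
  then show ?thesis using assms less by auto
next
  case greater
  then have "P * s + P \<le> P * t"
    by (rule mult_add_le_mult_if_less)
  then show ?thesis using assms greater by auto
qed auto

lemma diff_add_mult_no_borrow:
  fixes u w s t P :: nat
  assumes "w \<le> u" "t \<le> s"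
  shows "u + P * s - (w + P * t) = (u - w) + P * (s - t)"
  using assms by (simp add: diff_mult_distrib2 mult_le_mono2)

lemma diff_add_mult_borrow:
  fixes u w s t P :: nat
  assumes "u < w" "w < P" "t < s"
  shows "u + P * s - (w + P * t) = (u + P - w) + P * (s - t - 1)"
  using assms mult_add_le_mult_if_less[OF \<open>t < s\<close>, of P] by (simp add: diff_mult_distrib2)

section \<open>Shifts of \<open>L_A\<close>\<close>

lemma LA_append:
  assumes UW: "(U, W) \<in> Mpq p p" and ST: "(S, T) \<in> Mpq p p"
  defines "l \<equiv> length U" and "k \<equiv> length S"
    and "u \<equiv> num p U" and "w \<equiv> num p W" and "s \<equiv> num p S" and "t \<equiv> num p T"
  shows "LA p A (U @ S, W @ T) =
    (if w \<le> u then
       if t \<le> s then A (word_of p l (u - w) @ word_of p k (s - t)) else 0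
     else
       if t < s then A (word_of p l (u + p ^ l - w) @ word_of p k (s - t - 1)) else 0)"
proof -
  have len: "length W = l" "length T = k"
    using UW ST by (auto simp: Mpq_def l_def k_def)
  have bounds: "u < p ^ l" "w < p ^ l" "s < p ^ k"
    using UW ST num_less[of U p] num_less[of W p] num_less[of S p] len
    by (auto simp: Mpq_def u_def w_def s_def l_def k_def)
  have LA_eq: "LA p A (U @ S, W @ T) =
      (if w + p ^ l * t \<le> u + p ^ l * s
       then A (word_of p (l + k) (u + p ^ l * s - (w + p ^ l * t))) else 0)"
    using UW ST len by (auto simp: LA_def Mpq_def num_append u_def w_def s_def t_def l_def k_def)
  show ?thesis
  proof (cases "w \<le> u")
    case True
    have "word_of p (l + k) (u + p ^ l * s - (w + p ^ l * t)) =
        word_of p l (u - w) @ word_of p k (s - t)" if "t \<le> s"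
      unfolding diff_add_mult_no_borrow[OF True that]
      by (rule word_of_add_mult) (use bounds in auto)
    then show ?thesis
      using LA_eq True bounds by (simp add: add_mult_le_add_mult_iff)
  next
    case False
    then have "u < w" by simp
    have "word_of p (l + k) (u + p ^ l * s - (w + p ^ l * t)) =
        word_of p l (u + p ^ l - w) @ word_of p k (s - t - 1)" if "t < s"
      unfolding diff_add_mult_borrow[OF \<open>u < w\<close> bounds(2) that]
      by (rule word_of_add_mult) (use bounds \<open>u < w\<close> in auto)
    then show ?thesis
      using LA_eq False bounds by (simp add: add_mult_le_add_mult_iff)
  qed
qed

definition UA :: "nat \<Rightarrow> (nat list \<Rightarrow> 'k::zero) \<Rightarrow> (nat list \<times> nat list \<Rightarrow> 'k)" where
  "UA p A = (\<lambda>(U, W). if (U, W) \<in> Mpq p p \<and> num p U < num p W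
      then A (word_of p (length U) (num p U + p ^ length U - num p W)) else 0)"

lemma rho2_LA:
  fixes A :: "nat list \<Rightarrow> 'k::field"
  assumes ST: "(S, T) \<in> Mpq p p"
  defines "k \<equiv> length S" and "s \<equiv> num p S" and "t \<equiv> num p T"
  shows "rho2 p p (S, T) (LA p A) =
    LA p (if t \<le> s then rho1 p (word_of p k (s - t)) A else 0) +
    UA p (if t < s then rho1 p (word_of p k (s - t - 1)) A else 0)"
proof (rule ext, clarify)
  fix U W
  show "rho2 p p (S, T) (LA p A) (U, W) =
    (LA p (if t \<le> s then rho1 p (word_of p k (s - t)) A else 0) +
     UA p (if t < s then rho1 p (word_of p k (s - t - 1)) A else 0)) (U, W)"
  proof (cases "(U, W) \<in> Mpq p p")
    case True
    then have "num p U < p ^ length U" using num_less[of U p] by (simp add: Mpq_def)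
    then show ?thesis
      using LA_append[OF True ST, of A]
      by (auto simp: rho2_def LA_def UA_def rho1_def word_of_in_words k_def s_def t_def)
  qed (simp add: rho2_def LA_def UA_def)
qed

definition first_column :: "nat \<Rightarrow> (nat list \<times> nat list \<Rightarrow> 'k::zero) \<Rightarrow> (nat list \<Rightarrow> 'k)" where
  "first_column p B = (\<lambda>U. if U \<in> words p then B (U, replicate (length U) 0) else 0)"

lemma linear_LA: "Vector_Spaces.linear fscale fscale (LA p :: (nat list \<Rightarrow> 'k::field) \<Rightarrow> _)"
  unfolding Vector_Spaces.linear_iff
  by (auto simp: vector_space_fscale LA_def fscale_def fun_eq_iff split: prod.splits)

lemma linear_UA: "Vector_Spaces.linear fscale fscale (UA p :: (nat list \<Rightarrow> 'k::field) \<Rightarrow> _)"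
  unfolding Vector_Spaces.linear_iff
  by (auto simp: vector_space_fscale UA_def fscale_def fun_eq_iff split: prod.splits)

lemma linear_first_column:
  "Vector_Spaces.linear fscale fscale (first_column p :: (_ \<Rightarrow> 'k::field) \<Rightarrow> _)"
  unfolding Vector_Spaces.linear_iff
  by (auto simp: vector_space_fscale first_column_def fscale_def fun_eq_iff)

lemma first_column_in_Fun1: "first_column p B \<in> Fun1 p"
  by (simp add: first_column_def Fun1_def)

lemma rho1_in_Fun1: "rho1 p S A \<in> Fun1 p"
  by (simp add: rho1_def Fun1_def)

lemma zero_in_Fun1: "0 \<in> Fun1 p"
  by (simp add: Fun1_def)

lemma replicate_0_in_Mpq: "U \<in> words p \<Longrightarrow> (U, replicate (length U) 0) \<in> Mpq p p"
  by (cases U) (auto simp: Mpq_def words_def)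

lemma first_column_LA: "A \<in> Fun1 p \<Longrightarrow> first_column p (LA p A) = A"
  by (auto simp: first_column_def LA_def Fun1_def words_def replicate_0_in_Mpq word_of_num
      fun_eq_iff)

lemma first_column_UA: "first_column p (UA p A) = 0"
  by (auto simp: first_column_def UA_def fun_eq_iff)

lemma first_column_rho2_LA:
  fixes A :: "nat list \<Rightarrow> 'k::field"
  assumes "(S, T) \<in> Mpq p p"
  shows "first_column p (rho2 p p (S, T) (LA p A)) =
    (if num p T \<le> num p S then rho1 p (word_of p (length S) (num p S - num p T)) A else 0)"
  unfolding rho2_LA[OF assms] module_hom.add[OF module_hom_linearI[OF linear_first_column]]
  by (simp add: first_column_UA first_column_LA rho1_in_Fun1 zero_in_Fun1)

lemma rho1_in_rec_closure1: "S \<in> words p \<Longrightarrow> rho1 p S A \<in> rec_closure1 p A"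
  unfolding rec_closure1_def by (rule fun_space.span_base) blast

lemma shifted_word_of_in_words:
  "(S, T) \<in> Mpq p p \<Longrightarrow> word_of p (length S) (num p S - n) \<in> words p"
  using num_less[of S p] by (intro word_of_in_words) (auto simp: Mpq_def)

lemma first_column_image_rec_closure2_LA:
  fixes A :: "nat list \<Rightarrow> 'k::field"
  shows "first_column p ` rec_closure2 p p (LA p A) = rec_closure1 p A"
proof -
  let ?G1 = "{rho1 p S A | S. S \<in> words p}"
  let ?G2 = "{rho2 p p ST (LA p A) | ST. ST \<in> Mpq p p}"
  have "first_column p ` ?G2 \<subseteq> insert 0 ?G1"
  proof
    fix X assume "X \<in> first_column p ` ?G2"
    then obtain S T where ST: "(S, T) \<in> Mpq p p"
      and X: "X = first_column p (rho2 p p (S, T) (LA p A))"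
      by auto
    show "X \<in> insert 0 ?G1"
      using shifted_word_of_in_words[OF ST] by (auto simp: X first_column_rho2_LA ST)
  qed
  moreover have "?G1 \<subseteq> first_column p ` ?G2"
  proof
    fix X assume "X \<in> ?G1"
    then obtain S where S: "S \<in> words p" and X: "X = rho1 p S A" by blast
    have "word_of p (length S) (num p S) = S"
      using S word_of_num by (auto simp: words_def)
    then have "X = first_column p (rho2 p p (S, replicate (length S) 0) (LA p A))"
      by (simp add: first_column_rho2_LA replicate_0_in_Mpq[OF S] X)
    then show "X \<in> first_column p ` ?G2"
      using replicate_0_in_Mpq[OF S] by blast
  qed
  ultimately have "fspan (first_column p ` ?G2) = fspan ?G1"
    using fun_space.span_mono[of "first_column p ` ?G2" "insert 0 ?G1"]
      fun_space.span_mono[of ?G1 "first_column p ` ?G2"]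
    by simp
  then show ?thesis
    by (simp add: rec_closure1_def rec_closure2_def span_linear_image[OF linear_first_column])
qed

lemma rho2_LA_in_sum_images:
  fixes A :: "nat list \<Rightarrow> 'k::field"
  shows "{rho2 p p ST (LA p A) | ST. ST \<in> Mpq p p} \<subseteq>
    {LA p X + UA p Y | X Y. X \<in> rec_closure1 p A \<and> Y \<in> rec_closure1 p A}"
proof clarify
  fix S T assume ST: "(S, T) \<in> Mpq p p"
  have shifts: "rho1 p (word_of p (length S) (num p S - n)) A \<in> rec_closure1 p A" for n
    by (rule rho1_in_rec_closure1[OF shifted_word_of_in_words[OF ST]])
  have zero: "0 \<in> rec_closure1 p A"
    unfolding rec_closure1_def by (rule fun_space.span_zero)
  show "\<exists>X Y. rho2 p p (S, T) (LA p A) = LA p X + UA p Y \<and>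
      X \<in> rec_closure1 p A \<and> Y \<in> rec_closure1 p A"
    by (intro exI conjI, rule rho2_LA[OF ST]) (simp_all add: shifts zero)
qed

lemma edim_rec_closure1_le_edim_rec_closure2_LA:
  fixes A :: "nat list \<Rightarrow> 'k::field"
  shows "edim (rec_closure1 p A) \<le> edim (rec_closure2 p p (LA p A))"
  using edim_linear_image_le[OF linear_first_column[of p], where V = "rec_closure2 p p (LA p A)"]
  by (simp add: first_column_image_rec_closure2_LA)

lemma edim_rec_closure2_LA_le:
  fixes A :: "nat list \<Rightarrow> 'k::field"
  shows "edim (rec_closure2 p p (LA p A)) \<le> 2 * edim (rec_closure1 p A)"
  unfolding rec_closure2_def
  by (rule edim_span_sum_linear_images_le[OF linear_LA linear_UA rho2_LA_in_sum_images])

lemma fin_dim_rec_closure2_LA_iff: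
  fixes A :: "nat list \<Rightarrow> 'k::field"
  shows "fin_dim (rec_closure2 p p (LA p A)) \<longleftrightarrow> fin_dim (rec_closure1 p A)"
  unfolding fin_dim_iff_edim_less_infinity
proof
  assume "edim (rec_closure2 p p (LA p A)) < \<infinity>"
  with edim_rec_closure1_le_edim_rec_closure2_LA
  show "edim (rec_closure1 p A) < \<infinity>" by (rule le_less_trans)
next
  assume "edim (rec_closure1 p A) < \<infinity>"
  then have "2 * edim (rec_closure1 p A) < \<infinity>"
    by (cases "edim (rec_closure1 p A)") (simp_all add: numeral_eq_enat)
  with edim_rec_closure2_LA_le
  show "edim (rec_closure2 p p (LA p A)) < \<infinity>" by (rule le_less_trans)
qed

section \<open>Lower triangular Toeplitz elements\<close>

lemma LA_in_Fun2: "LA p A \<in> Fun2 p p"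
  by (auto simp: Fun2_def LA_def)

lemma lower_triangular_LA: "lower_triangular p (LA p A)"
  by (auto simp: lower_triangular_def LA_def)

lemma toeplitz_type_LA: "toeplitz_type p (LA p A)"
  unfolding toeplitz_type_def
proof (intro allI impI)
  fix l U W U' W'
  assume H: "U \<in> words_len p l \<and> W \<in> words_len p l \<and> U' \<in> words_len p l \<and> W' \<in> words_len p l \<and>
      int (num p U) - int (num p W) = int (num p U') - int (num p W')"
  then have "num p W \<le> num p U \<longleftrightarrow> num p W' \<le> num p U'"
    and "num p U - num p W = num p U' - num p W'"
    by linarith+
  with H show "LA p A (U, W) = LA p A (U', W')"
    by (simp add: LA_def Mpq_def words_len_def)
qed

lemma toeplitz_type_eq_first_column:
  assumes "toeplitz_type p B" "(U, W) \<in> Mpq p p" "num p W \<le> num p U"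
  defines "l \<equiv> length U"
  shows "B (U, W) = B (word_of p l (num p U - num p W), replicate l 0)"
proof -
  have U: "U \<in> words_len p l" and W: "W \<in> words_len p l"
    using assms(2) by (auto simp: Mpq_def words_len_def l_def)
  have bound: "num p U - num p W < p ^ l"
    using num_less[of U p] U by (simp add: words_len_def)
  then have "word_of p l (num p U - num p W) \<in> words_len p l"
    using set_word_of by (simp add: words_len_def)
  moreover have "replicate l 0 \<in> words_len p l"
    using U by (cases U) (auto simp: words_len_def)
  moreover have "int (num p U) - int (num p W) =
      int (num p (word_of p l (num p U - num p W))) - int (num p (replicate l 0))"
    using bound assms(3) by (simp add: num_word_of of_nat_diff)
  ultimately show ?thesis
    using assms(1) U W unfolding toeplitz_type_def by (elim allE impE) (intro conjI; assumption)
qed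

lemma LA_first_column:
  assumes "B \<in> Fun2 p p" "toeplitz_type p B" "lower_triangular p B"
  shows "LA p (first_column p B) = B"
proof (rule ext, clarify)
  fix U W
  show "LA p (first_column p B) (U, W) = B (U, W)"
  proof (cases "(U, W) \<in> Mpq p p")
    case UW: True
    show ?thesis
    proof (cases "num p W \<le> num p U")
      case True
      have "num p U - num p W < p ^ length U"
        using UW num_less[of U p] by (simp add: Mpq_def)
      then show ?thesis
        using UW True toeplitz_type_eq_first_column[OF assms(2) UW True]
        by (simp add: LA_def first_column_def word_of_in_words)
    next
      case False
      then show ?thesis
        using UW assms(3) by (auto simp: LA_def Mpq_def lower_triangular_def words_len_def)
    qed
  qed (use assms(1) in \<open>simp add: LA_def Fun2_def\<close>)
qed

lemma LA_first_column_Trec: "B \<in> Trec p \<Longrightarrow> LA p (first_column p B) = B"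
  by (simp add: Trec_def Rec2_def LA_first_column)

lemma LA_in_Trec_iff:
  fixes A :: "nat list \<Rightarrow> 'k::field"
  assumes "A \<in> Fun1 p"
  shows "LA p A \<in> Trec p \<longleftrightarrow> A \<in> Rec1 p"
  using assms
  by (simp add: Trec_def Rec2_def Rec1_def LA_in_Fun2 toeplitz_type_LA lower_triangular_LA
      fin_dim_rec_closure2_LA_iff)

theorem mainTheorem10:
  fixes p :: nat
  shows "(\<forall>A :: nat list \<Rightarrow> 'k::field. A \<in> Fun1 p \<longrightarrow>
            edim (rec_closure1 p A) \<le> edim (rec_closure2 p p (LA p A)) \<and>
            edim (rec_closure2 p p (LA p A)) \<le> 2 * edim (rec_closure1 p A))
       \<and> Vector_Spaces.linear fscale fscale (LA p :: (nat list \<Rightarrow> 'k) \<Rightarrow> _)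
       \<and> bij_betw (LA p) (Rec1 p :: (nat list \<Rightarrow> 'k) set) (Trec p)"
proof (intro conjI allI impI)
  show "bij_betw (LA p) (Rec1 p :: (nat list \<Rightarrow> 'k) set) (Trec p)"
  proof (rule bij_betw_byWitness[where f' = "first_column p"])
    show "\<forall>A \<in> Rec1 p. first_column p (LA p A) = A"
      by (simp add: Rec1_def first_column_LA)
    show "\<forall>B \<in> Trec p. LA p (first_column p B) = (B :: _ \<Rightarrow> 'k)"
      by (simp add: LA_first_column_Trec)
    show "LA p ` Rec1 p \<subseteq> Trec p"
      by (auto simp: Rec1_def LA_in_Trec_iff)
    show "first_column p ` Trec p \<subseteq> (Rec1 p :: (_ \<Rightarrow> 'k) set)"
      using LA_first_column_Trec LA_in_Trec_iff[OF first_column_in_Fun1] by (metis image_subset_iff)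
  qed
qed (simp_all add: edim_rec_closure1_le_edim_rec_closure2_LA edim_rec_closure2_LA_le linear_LA)

end
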